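(* Let $t\geqslant 2$ be an integer, let $r\in\{2t,2t+1\}$, and set $\ell^*=5$ if $r=2t$ and $\ell^*=7$ if $r=2t+1$. Then for every $n\geqslant 2r-1$, $$I(n,2r-1,r)\geqslant 2\binom{2t-3}{t}+\ell^*\binom{2t-2}{t-1}.$$ Moreover, for every $n\geqslant 2r$, $$N(n,2r-1,r)=I(n,2r-1,r)\geqslant N(n,2r,r),$$ and consequently $N(n,2r-1,r)\geqslant 2\binom{2t-3}{t}+\ell^*\binom{2t-2}{t-1}$.
   Context: $\mathrm{Sym}_n$ is the symmetric group of permutations of $[n]=\{1,\dots,n\}$. The Hamming distance between $\pi,\tau\in\mathrm{Sym}_n$ is $d(\pi,\tau)=|\{i\in[n]:\pi(i)\neq\tau(i)\}|$, and $B_r(\pi)=\{\tau\in\mathrm{Sym}_n: d(\pi,\tau)\leqslant r\}$. For integers $d,r$, $I(n,d,r)=\max_{\pi,\tau\in\mathrm{Sym}_n,\ d(\pi,\tau)=d}|B_r(\pi)\cap B_r(\tau)|$ and $N(n,d,r)=\max_{\pi,\tau\in\mathrm{Sym}_n,\ d(\pi,\tau)\geqslant d}|B_r(\pi)\cap B_r(\tau)|$. Binomial convention: $\binom{0}{0}=1$ and $\binom{p}{q}=0$ whenever $p<q$, $p<0$ or $q<0$. *)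

theory Defs
  imports Main "HOL-Combinatorics.Permutations"
begin

definition Sym :: "nat \<Rightarrow> (nat \<Rightarrow> nat) set" where
  "Sym n = {p. p permutes {1..n}}"

definition hdist :: "nat \<Rightarrow> (nat \<Rightarrow> nat) \<Rightarrow> (nat \<Rightarrow> nat) \<Rightarrow> nat" where
  "hdist n p q = card {i \<in> {1..n}. p i \<noteq> q i}"

definition ball_perm :: "nat \<Rightarrow> nat \<Rightarrow> (nat \<Rightarrow> nat) \<Rightarrow> (nat \<Rightarrow> nat) set" where
  "ball_perm n r p = {q \<in> Sym n. hdist n p q \<le> r}"

definition Iint :: "nat \<Rightarrow> nat \<Rightarrow> nat \<Rightarrow> nat" where
  "Iint n d r = Max {card (ball_perm n r p \<inter> ball_perm n r q) | p q.
                       p \<in> Sym n \<and> q \<in> Sym n \<and> hdist n p q = d}"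

definition Nint :: "nat \<Rightarrow> nat \<Rightarrow> nat \<Rightarrow> nat" where
  "Nint n d r = Max {card (ball_perm n r p \<inter> ball_perm n r q) | p q.
                       p \<in> Sym n \<and> q \<in> Sym n \<and> hdist n p q \<ge> d}"

end

theory Submission
  imports Defs
begin

text \<open>If \<open>d(p, q) = 2r\<close>, every permutation within distance \<open>r\<close> of both \<open>p\<close> and \<open>q\<close>
  agrees at each point with \<open>p\<close> or with \<open>q\<close>. Normalising \<open>p = id\<close>, this allows one to change \<open>q\<close>
  on a few points, according to whether it has a cycle of length at least 3 or is an involution,
  into a permutation at distance \<open>2r - 1\<close> from \<open>id\<close>, and to inject the common \<open>r\<close>-balls of the
  old pair into those of the new one. As pairs at distance more than \<open>2r\<close> have disjoint
  \<open>r\<close>-balls, the maximum over pairs at distance at least \<open>2r - 1\<close> (or \<open>2r\<close>) is attained at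
  distance exactly \<open>2r - 1\<close>.

  For the lower bound let \<open>p = id\<close> and let \<open>q\<close> act as a \<open>c\<close>-cycle on the first \<open>c\<close> points
  (\<open>c = 5\<close> if \<open>r = 2t\<close>, \<open>c = 7\<close> if \<open>r = 2t + 1\<close>) and swap each of the \<open>m = 2t - 3\<close> following
  pairs of points, so that \<open>d(p, q) = 2r - 1\<close>. A permutation acting as a suitable \<open>L\<close> on the
  first \<open>c\<close> points and swapping a set of these pairs of the right size lies in both \<open>r\<close>-balls;
  a finite table of such \<open>L\<close> yields the binomial sum.\<close>

abbreviation ball_inter :: "nat \<Rightarrow> nat \<Rightarrow> (nat \<Rightarrow> nat) \<Rightarrow> (nat \<Rightarrow> nat) \<Rightarrow> (nat \<Rightarrow> nat) set"
  where "ball_inter n r p q \<equiv> ball_perm n r p \<inter> ball_perm n r q"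

section \<open>Hamming distance and balls\<close>

lemma hdist_commute: "hdist n p q = hdist n q p"
  unfolding hdist_def by (rule arg_cong[where f = card]) auto

lemma hdist_triangle: "hdist n p q \<le> hdist n p x + hdist n x q"
proof -
  have "{i \<in> {1..n}. p i \<noteq> q i} \<subseteq> {i \<in> {1..n}. p i \<noteq> x i} \<union> {i \<in> {1..n}. x i \<noteq> q i}"
    by auto
  then have "hdist n p q \<le> card ({i \<in> {1..n}. p i \<noteq> x i} \<union> {i \<in> {1..n}. x i \<noteq> q i})"
    unfolding hdist_def by (intro card_mono) auto
  also have "\<dots> \<le> hdist n p x + hdist n x q"
    unfolding hdist_def by (rule card_Un_le)
  finally show ?thesis .
qed

lemma hdist_comp_left: "inj g \<Longrightarrow> hdist n (g \<circ> p) (g \<circ> q) = hdist n p q"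
  unfolding hdist_def by (simp add: inj_eq)

lemma hdist_change_at:
  assumes "distinct xs" "set xs \<subseteq> {1..n}"
    and "\<And>i. i \<notin> set xs \<Longrightarrow> f i = f' i \<and> g i = g' i"
  shows "hdist n f g + length (filter (\<lambda>i. f' i \<noteq> g' i) xs)
       = hdist n f' g' + length (filter (\<lambda>i. f i \<noteq> g i) xs)"
proof -
  have split: "hdist n h k = card {i \<in> {1..n} - set xs. h i \<noteq> k i} + length (filter (\<lambda>i. h i \<noteq> k i) xs)"
    for h k
  proof -
    have eq: "{i \<in> {1..n}. h i \<noteq> k i} = {i \<in> {1..n} - set xs. h i \<noteq> k i} \<union> ({i. h i \<noteq> k i} \<inter> set xs)"
      using assms(2) by auto
    have "card ({i \<in> {1..n} - set xs. h i \<noteq> k i} \<union> ({i. h i \<noteq> k i} \<inter> set xs))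
        = card {i \<in> {1..n} - set xs. h i \<noteq> k i} + card ({i. h i \<noteq> k i} \<inter> set xs)"
      by (rule card_Un_disjoint) auto
    then show ?thesis
      by (simp only: hdist_def eq distinct_length_filter[OF assms(1)])
  qed
  have "{i \<in> {1..n} - set xs. f i \<noteq> g i} = {i \<in> {1..n} - set xs. f' i \<noteq> g' i}"
    using assms(3) by auto
  then show ?thesis
    unfolding split[of f g] split[of f' g'] by simp
qed

lemma finite_Sym: "finite (Sym n)"
  unfolding Sym_def by (rule finite_permutations) simp

lemma id_in_Sym: "id \<in> Sym n"
  unfolding Sym_def by simp

lemma finite_ball_perm: "finite (ball_perm n r p)"
  unfolding ball_perm_def using finite_Sym by simp

lemma mem_ball_inter_iff:
  "\<sigma> \<in> ball_inter n r p q \<longleftrightarrow> \<sigma> permutes {1..n} \<and> hdist n p \<sigma> \<le> r \<and> hdist n q \<sigma> \<le> r"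
  unfolding ball_perm_def Sym_def by auto

lemma ball_inter_eq_empty:
  assumes "2*r < hdist n p q"
  shows "ball_inter n r p q = {}"
proof (rule ccontr)
  assume "ball_inter n r p q \<noteq> {}"
  then obtain \<sigma> where "hdist n p \<sigma> \<le> r" "hdist n q \<sigma> \<le> r"
    unfolding ball_perm_def by auto
  then show False
    using assms hdist_triangle[of n p q \<sigma>] hdist_commute[of n \<sigma> q] by linarith
qed

lemma card_ball_inter_le_comp_left:
  assumes "g \<in> Sym n"
  shows "card (ball_inter n r p q) \<le> card (ball_inter n r (g \<circ> p) (g \<circ> q))"
proof (rule card_inj_on_le)
  have g: "g permutes {1..n}" "inj g"
    using assms permutes_inj unfolding Sym_def by auto
  show "inj_on ((\<circ>) g) (ball_inter n r p q)"
  proof (rule inj_onI)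
    fix x y assume "g \<circ> x = g \<circ> y"
    then show "x = y"
      using g(2) by (simp add: fun_eq_iff inj_eq)
  qed
  show "(\<circ>) g ` ball_inter n r p q \<subseteq> ball_inter n r (g \<circ> p) (g \<circ> q)"
  proof (rule image_subsetI)
    fix \<sigma> assume "\<sigma> \<in> ball_inter n r p q"
    then show "g \<circ> \<sigma> \<in> ball_inter n r (g \<circ> p) (g \<circ> q)"
      using g unfolding mem_ball_inter_iff by (simp add: hdist_comp_left permutes_compose)
  qed
  show "finite (ball_inter n r (g \<circ> p) (g \<circ> q))"
    using finite_ball_perm by blast
qed

lemma midpoint_values:
  assumes "hdist n p q = 2*r" "hdist n p \<sigma> \<le> r" "hdist n q \<sigma> \<le> r" "i \<in> {1..n}"
  shows "\<sigma> i = p i \<or> \<sigma> i = q i"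
proof (rule ccontr)
  assume i: "\<not> (\<sigma> i = p i \<or> \<sigma> i = q i)"
  define X where "X = {i \<in> {1..n}. p i \<noteq> \<sigma> i}"
  define Y where "Y = {i \<in> {1..n}. q i \<noteq> \<sigma> i}"
  have XY: "finite X" "finite Y" "card X \<le> r" "card Y \<le> r"
    using assms(2,3) unfolding X_def Y_def hdist_def by auto
  have "{i \<in> {1..n}. p i \<noteq> q i} \<subseteq> X \<union> Y"
    unfolding X_def Y_def by auto
  then have "2*r \<le> card (X \<union> Y)"
    using assms(1) XY unfolding hdist_def by (metis card_mono finite_Un)
  moreover have "i \<in> X \<inter> Y"
    using i assms(4) unfolding X_def Y_def by auto
  then have "1 \<le> card (X \<inter> Y)"
    using XY by (metis One_nat_def Suc_leI card_gt_0_iff empty_iff finite_Int)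
  ultimately show False
    using XY card_Un_Int[of X Y] by linarith
qed

lemma finite_image_pairs: "finite A \<Longrightarrow> finite {f p q | p q. p \<in> A \<and> q \<in> A \<and> P p q}"
proof -
  assume "finite A"
  have "{f p q | p q. p \<in> A \<and> q \<in> A \<and> P p q} \<subseteq> (\<lambda>(p,q). f p q) ` (A \<times> A)"
    by auto
  then show ?thesis
    using \<open>finite A\<close> by (meson finite_SigmaI finite_imageI finite_subset)
qed

lemma card_ball_inter_le_Iint:
  "p \<in> Sym n \<Longrightarrow> q \<in> Sym n \<Longrightarrow> hdist n p q = d \<Longrightarrow> card (ball_inter n r p q) \<le> Iint n d r"
  unfolding Iint_def by (rule Max_ge) (use finite_image_pairs[OF finite_Sym] in auto)

lemma card_ball_inter_le_Nint:
  "p \<in> Sym n \<Longrightarrow> q \<in> Sym n \<Longrightarrow> d \<le> hdist n p q \<Longrightarrow> card (ball_inter n r p q) \<le> Nint n d r"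
  unfolding Nint_def by (rule Max_ge) (use finite_image_pairs[OF finite_Sym] in auto)

lemma Nint_le:
  assumes "p \<in> Sym n" "q \<in> Sym n" "d \<le> hdist n p q"
    and "\<And>p q. p \<in> Sym n \<Longrightarrow> q \<in> Sym n \<Longrightarrow> d \<le> hdist n p q \<Longrightarrow> card (ball_inter n r p q) \<le> M"
  shows "Nint n d r \<le> M"
  unfolding Nint_def using finite_image_pairs[OF finite_Sym] assms by (subst Max_le_iff) auto

lemma Iint_le_Nint:
  assumes "p \<in> Sym n" "q \<in> Sym n" "hdist n p q = d"
  shows "Iint n d r \<le> Nint n d r"
proof -
  have "Iint n d r \<in> {card (ball_inter n r p q) | p q. p \<in> Sym n \<and> q \<in> Sym n \<and> hdist n p q = d}"
    unfolding Iint_def by (rule Max_in) (use finite_image_pairs[OF finite_Sym] assms in auto)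
  then show ?thesis
    using card_ball_inter_le_Nint by fastforce
qed

section \<open>Pairs at distance 2r\<close>

lemma card_le_card_switch:
  assumes "finite B" "surj \<tau>"
    and into: "\<And>\<sigma>. \<sigma> \<in> A \<Longrightarrow> (if P \<sigma> then \<sigma> \<circ> \<tau> else \<sigma>) \<in> B"
    and apart: "\<And>x y. x \<in> A \<Longrightarrow> y \<in> A \<Longrightarrow> P x \<Longrightarrow> \<not> P y \<Longrightarrow> x \<circ> \<tau> \<noteq> y"
  shows "card A \<le> card B"
proof (rule card_inj_on_le)
  show "inj_on (\<lambda>\<sigma>. if P \<sigma> then \<sigma> \<circ> \<tau> else \<sigma>) A"
  proof (rule inj_onI)
    fix x y assume xy: "x \<in> A" "y \<in> A" "(if P x then x \<circ> \<tau> else x) = (if P y then y \<circ> \<tau> else y)"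
    have "x = y" if "x \<circ> \<tau> = y \<circ> \<tau>"
      using surj_fun_eq[of \<tau> UNIV x y] \<open>surj \<tau>\<close> that by simp
    then show "x = y"
      using xy apart[OF xy(1,2)] apart[OF xy(2,1)] by (auto split: if_splits)
  qed
  show "(\<lambda>\<sigma>. if P \<sigma> then \<sigma> \<circ> \<tau> else \<sigma>) ` A \<subseteq> B"
    using into by blast
qed fact

lemma long_cycle_switch:
  assumes s: "s permutes {1..n}" "hdist n id s = 2*r" "s a = b" "s b = c"
    and abc: "distinct [a, b, c]" "a \<in> {1..n}" "b \<in> {1..n}"
    and \<sigma>: "\<sigma> \<in> ball_inter n r id s"
  shows "(if \<sigma> b = c then \<sigma> \<circ> transpose a b else \<sigma>) \<in> ball_inter n r id (s \<circ> transpose a b)"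
proof -
  have \<sigma>': "\<sigma> permutes {1..n}" "hdist n id \<sigma> \<le> r" "hdist n s \<sigma> \<le> r"
    using \<sigma> unfolding mem_ball_inter_iff by auto
  have mid: "\<sigma> i = i \<or> \<sigma> i = s i" if "i \<in> {1..n}" for i
    using midpoint_values[OF s(2) \<sigma>'(2,3) that] by simp
  define \<sigma>\<^sub>1 where "\<sigma>\<^sub>1 = (if \<sigma> b = c then \<sigma> \<circ> transpose a b else \<sigma>)"
  have \<sigma>_ab: "\<sigma> b = c \<and> \<sigma> a = b \<or> \<sigma> b = b \<and> \<sigma> a = a"
  proof (cases "\<sigma> b = c")
    case True
    obtain x where x: "x \<in> {1..n}" "\<sigma> x = b"
      using permutes_image[OF \<sigma>'(1)] abc(3) by (metis imageE)
    have "x = a"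
      using mid[OF x(1)] x(2) True abc(1) s(3) permutes_inj[OF s(1)] by (auto dest: injD)
    then show ?thesis using True x by simp
  next
    case False
    then have "\<sigma> b = b"
      using mid[OF abc(3)] s(4) by auto
    moreover have "\<sigma> a \<noteq> b"
      using \<open>\<sigma> b = b\<close> abc(1) permutes_inj[OF \<sigma>'(1)] by (metis distinct_length_2_or_more injD)
    ultimately show ?thesis
      using mid[OF abc(2)] s(3) by auto
  qed
  have "hdist n id \<sigma> + length (filter (\<lambda>i. id i \<noteq> \<sigma>\<^sub>1 i) [a, b])
      = hdist n id \<sigma>\<^sub>1 + length (filter (\<lambda>i. id i \<noteq> \<sigma> i) [a, b])"
    and "hdist n s \<sigma> + length (filter (\<lambda>i. (s \<circ> transpose a b) i \<noteq> \<sigma>\<^sub>1 i) [a, b])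
      = hdist n (s \<circ> transpose a b) \<sigma>\<^sub>1 + length (filter (\<lambda>i. s i \<noteq> \<sigma> i) [a, b])"
    by (rule hdist_change_at; use abc in \<open>auto simp: \<sigma>\<^sub>1_def\<close>)+
  then have "hdist n id \<sigma>\<^sub>1 \<le> r \<and> hdist n (s \<circ> transpose a b) \<sigma>\<^sub>1 \<le> r"
    using \<sigma>_ab \<sigma>'(2,3) abc(1) s(3,4) by (auto simp: \<sigma>\<^sub>1_def)
  moreover have "\<sigma>\<^sub>1 permutes {1..n}"
    using \<sigma>'(1) abc by (simp add: \<sigma>\<^sub>1_def permutes_compose permutes_swap_id)
  ultimately show ?thesis
    unfolding mem_ball_inter_iff \<sigma>\<^sub>1_def by simp
qed

lemma inj_fix_or_swap:
  assumes "inj f" "f x = x \<or> f x = y" "f y = y \<or> f y = x"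
  shows "f x = x \<and> f y = y \<or> f x = y \<and> f y = x"
  using assms by (metis injD)

lemma involution_switch:
  assumes s: "s permutes {1..n}" "hdist n id s = 2*r" "s a = b" "s b = a" "s c = d" "s d = c"
    and abcd: "distinct [a, b, c, d]" "set [a, b, c, d] \<subseteq> {1..n}"
    and \<sigma>: "\<sigma> \<in> ball_inter n r id s"
  shows "(if \<sigma> c = d then \<sigma> \<circ> (transpose b c \<circ> transpose b d) else \<sigma>)
    \<in> ball_inter n r id (s \<circ> (transpose b c \<circ> transpose b d))"
proof -
  let ?\<tau> = "transpose b c \<circ> transpose b d"
  have \<sigma>': "\<sigma> permutes {1..n}" "hdist n id \<sigma> \<le> r" "hdist n s \<sigma> \<le> r"
    using \<sigma> unfolding mem_ball_inter_iff by auto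
  have mid: "\<sigma> i = i \<or> \<sigma> i = s i" if "i \<in> {1..n}" for i
    using midpoint_values[OF s(2) \<sigma>'(2,3) that] by simp
  have \<tau>: "?\<tau> a = a" "?\<tau> b = d" "?\<tau> c = b" "?\<tau> d = c" "?\<tau> i = i" if "i \<notin> set [a, b, c, d]" for i
    using abcd(1) that by (auto simp: transpose_def)
  define \<sigma>\<^sub>1 where "\<sigma>\<^sub>1 = (if \<sigma> c = d then \<sigma> \<circ> ?\<tau> else \<sigma>)"
  have \<sigma>_ab: "\<sigma> a = a \<and> \<sigma> b = b \<or> \<sigma> a = b \<and> \<sigma> b = a"
    using mid[of a] mid[of b] abcd s(3,4) by (intro inj_fix_or_swap permutes_inj[OF \<sigma>'(1)]) auto
  have \<sigma>_cd: "\<sigma> c = c \<and> \<sigma> d = d \<or> \<sigma> c = d \<and> \<sigma> d = c"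
    using mid[of c] mid[of d] abcd s(5,6) by (intro inj_fix_or_swap permutes_inj[OF \<sigma>'(1)]) auto
  have "hdist n id \<sigma> + length (filter (\<lambda>i. id i \<noteq> \<sigma>\<^sub>1 i) [a, b, c, d])
      = hdist n id \<sigma>\<^sub>1 + length (filter (\<lambda>i. id i \<noteq> \<sigma> i) [a, b, c, d])"
    and "hdist n s \<sigma> + length (filter (\<lambda>i. (s \<circ> ?\<tau>) i \<noteq> \<sigma>\<^sub>1 i) [a, b, c, d])
      = hdist n (s \<circ> ?\<tau>) \<sigma>\<^sub>1 + length (filter (\<lambda>i. s i \<noteq> \<sigma> i) [a, b, c, d])"
    by (rule hdist_change_at; use abcd \<tau>(5) in \<open>auto simp: \<sigma>\<^sub>1_def\<close>)+
  then have "hdist n id \<sigma>\<^sub>1 \<le> r \<and> hdist n (s \<circ> ?\<tau>) \<sigma>\<^sub>1 \<le> r"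
    using \<sigma>_ab \<sigma>_cd \<sigma>'(2,3) abcd(1) s(3-6) \<tau>(1-4) by (auto simp: \<sigma>\<^sub>1_def)
  moreover have "\<sigma>\<^sub>1 permutes {1..n}"
    using \<sigma>'(1) abcd by (simp add: \<sigma>\<^sub>1_def permutes_compose permutes_swap_id)
  ultimately show ?thesis
    unfolding mem_ball_inter_iff \<sigma>\<^sub>1_def by simp
qed

lemma exists_closer_pair_long_cycle:
  assumes s: "s permutes {1..n}" "hdist n id s = 2*r"
    and a: "a \<in> {1..n}" "s a \<noteq> a" "s (s a) \<noteq> a"
  shows "\<exists>s'\<in>Sym n. hdist n id s' = 2*r - 1 \<and> card (ball_inter n r id s) \<le> card (ball_inter n r id s')"
proof -
  define b c where "b = s a" and "c = s (s a)"
  have abc: "distinct [a, b, c]" "b \<in> {1..n}"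
    using a permutes_inj[OF s(1)] permutes_in_image[OF s(1)] by (auto simp: b_def c_def dest: injD)
  let ?s' = "s \<circ> transpose a b"
  have "?s' \<in> Sym n"
    using s(1) a(1) abc(2) by (simp add: Sym_def permutes_compose permutes_swap_id)
  moreover have "hdist n id s + length (filter (\<lambda>i. id i \<noteq> ?s' i) [a, b])
      = hdist n id ?s' + length (filter (\<lambda>i. id i \<noteq> s i) [a, b])"
    by (rule hdist_change_at) (use a abc in auto)
  then have "hdist n id ?s' = 2*r - 1"
    using s(2) abc(1) by (simp add: b_def c_def)
  moreover have "card (ball_inter n r id s) \<le> card (ball_inter n r id ?s')"
  proof (rule card_le_card_switch[where P = "\<lambda>\<sigma>. \<sigma> b = c"])
    show "finite (ball_inter n r id ?s')" "surj (transpose a b)"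
      using finite_ball_perm by auto
    show "(if \<sigma> b = c then \<sigma> \<circ> transpose a b else \<sigma>) \<in> ball_inter n r id ?s'"
      if "\<sigma> \<in> ball_inter n r id s" for \<sigma>
      by (rule long_cycle_switch) (use s a abc that in \<open>auto simp: b_def c_def\<close>)
    show "x \<circ> transpose a b \<noteq> y"
      if "x \<in> ball_inter n r id s" "y \<in> ball_inter n r id s" "x b = c" "y b \<noteq> c" for x y
    proof -
      have "y a = a \<or> y a = b"
        using midpoint_values[OF s(2), of y a] that(2) a(1) unfolding mem_ball_inter_iff b_def by auto
      moreover have "(x \<circ> transpose a b) a = c"
        using that(3) by simp
      ultimately show ?thesis
        using abc(1) by auto
    qed
  qed
  ultimately show ?thesis by blast
qed

lemma involution_two_transpositions:
  assumes s: "s permutes {1..n}" "hdist n id s = 2*r" "2 \<le> r" "\<And>i. s (s i) = i"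
  obtains a b c d where "s a = b" "s b = a" "s c = d" "s d = c"
    "distinct [a, b, c, d]" "set [a, b, c, d] \<subseteq> {1..n}"
proof -
  define D where "D = {i \<in> {1..n}. i \<noteq> s i}"
  have D: "finite D" "card D = 2*r"
    using s(2) unfolding D_def hdist_def by auto
  have s_D: "s i \<in> D" if "i \<in> D" for i
    using that s(4)[of i] permutes_in_image[OF s(1)] unfolding D_def by auto
  obtain a where a: "a \<in> D"
    using D s(3) by fastforce
  define b where "b = s a"
  have "card (D - {a, b}) = 2*r - 2"
    using D a s_D by (subst card_Diff_subset) (auto simp: b_def D_def)
  then have "D - {a, b} \<noteq> {}"
    using s(3) by (intro notI) simp
  then obtain c where c: "c \<in> D" "c \<noteq> a" "c \<noteq> b"
    by auto
  define d where "d = s c"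
  have "b \<in> D" "d \<in> D" "a \<noteq> b" "c \<noteq> d"
    using a c s_D unfolding b_def d_def by (auto simp: D_def)
  moreover have "d \<noteq> a" "d \<noteq> b"
    using c s(4) unfolding b_def d_def by metis+
  ultimately have "distinct [a, b, c, d]" "set [a, b, c, d] \<subseteq> {1..n}"
    using a c unfolding D_def by auto
  then show ?thesis
    using that s(4) unfolding b_def d_def by blast
qed

lemma exists_closer_pair_involution:
  assumes s: "s permutes {1..n}" "hdist n id s = 2*r" "2 \<le> r" "\<And>i. s (s i) = i"
  shows "\<exists>s'\<in>Sym n. hdist n id s' = 2*r - 1 \<and> card (ball_inter n r id s) \<le> card (ball_inter n r id s')"
proof -
  obtain a b c d where ab: "s a = b" "s b = a" and cd: "s c = d" "s d = c"
    and abcd: "distinct [a, b, c, d]" "set [a, b, c, d] \<subseteq> {1..n}"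
    using involution_two_transpositions[OF s] .
  let ?\<tau> = "transpose b c \<circ> transpose b d"
  let ?s' = "s \<circ> ?\<tau>"
  have \<tau>: "?\<tau> a = a" "?\<tau> b = d" "?\<tau> c = b" "?\<tau> d = c" "?\<tau> i = i" if "i \<notin> set [a, b, c, d]" for i
    using abcd(1) that by (auto simp: transpose_def)
  have "?s' \<in> Sym n"
    using s(1) abcd(2) by (simp add: Sym_def permutes_compose permutes_swap_id)
  moreover have "hdist n id s + length (filter (\<lambda>i. id i \<noteq> ?s' i) [a, b, c, d])
      = hdist n id ?s' + length (filter (\<lambda>i. id i \<noteq> s i) [a, b, c, d])"
    by (rule hdist_change_at) (use abcd \<tau>(5) in auto)
  then have "hdist n id ?s' = 2*r - 1"
    using s(2) ab cd abcd(1) \<tau>(1-4) by simp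
  moreover have "card (ball_inter n r id s) \<le> card (ball_inter n r id ?s')"
  proof (rule card_le_card_switch[where P = "\<lambda>\<sigma>. \<sigma> c = d"])
    show "finite (ball_inter n r id ?s')"
      using finite_ball_perm by blast
    show "surj ?\<tau>"
      by (intro comp_surj surj_transpose)
    show "(if \<sigma> c = d then \<sigma> \<circ> ?\<tau> else \<sigma>) \<in> ball_inter n r id ?s'"
      if "\<sigma> \<in> ball_inter n r id s" for \<sigma>
      by (rule involution_switch) (use s(1,2) ab cd abcd that in auto)
    show "x \<circ> ?\<tau> \<noteq> y"
      if "x \<in> ball_inter n r id s" "y \<in> ball_inter n r id s" "x c = d" "y c \<noteq> d" for x y
    proof -
      have "x b = b \<or> x b = a" "y c = c \<or> y c = d"
        using midpoint_values[OF s(2), of x b] midpoint_values[OF s(2), of y c] that(1,2) abcd(2) ab cd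
        unfolding mem_ball_inter_iff by auto
      then show ?thesis
        using abcd(1) \<tau>(3) that(4) by (auto simp: fun_eq_iff intro!: exI[of _ c])
    qed
  qed
  ultimately show ?thesis by blast
qed

lemma exists_closer_pair:
  assumes "s permutes {1..n}" "hdist n id s = 2*r" "2 \<le> r"
  shows "\<exists>s'\<in>Sym n. hdist n id s' = 2*r - 1 \<and> card (ball_inter n r id s) \<le> card (ball_inter n r id s')"
proof (cases "\<exists>a\<in>{1..n}. s a \<noteq> a \<and> s (s a) \<noteq> a")
  case True
  then show ?thesis
    using exists_closer_pair_long_cycle[OF assms(1,2)] by blast
next
  case False
  then have "s (s i) = i" if "i \<in> {1..n}" "s i \<noteq> i" for i
    using that by auto
  moreover have "s i = i" if "\<not> (i \<in> {1..n} \<and> s i \<noteq> i)" for i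
    using that permutes_not_in[OF assms(1)] by blast
  ultimately have "s (s i) = i" for i
    by metis
  then show ?thesis
    using exists_closer_pair_involution[OF assms] by blast
qed

lemma card_ball_inter_far_le_Iint:
  assumes p: "p \<in> Sym n" and q: "q \<in> Sym n" and "2*r - 1 \<le> hdist n p q" "2 \<le> r"
  shows "card (ball_inter n r p q) \<le> Iint n (2*r - 1) r"
proof -
  consider "hdist n p q = 2*r - 1" | "hdist n p q = 2*r" | "2*r < hdist n p q"
    using assms(3) by linarith
  then show ?thesis
  proof cases
    case 1
    then show ?thesis using card_ball_inter_le_Iint[OF p q] by blast
  next
    case 2
    have p': "p permutes {1..n}" "inv p \<in> Sym n"
      using p unfolding Sym_def by (auto simp: permutes_inv)
    have "inv p \<circ> q permutes {1..n}"
      using p' q unfolding Sym_def by (simp add: permutes_compose)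
    moreover have "hdist n id (inv p \<circ> q) = 2*r"
      using hdist_comp_left[of "inv p" n p q] 2 permutes_inv_o(2)[OF p'(1)]
      by (simp add: permutes_inj[OF permutes_inv[OF p'(1)]])
    ultimately obtain s' where s': "s' \<in> Sym n" "hdist n id s' = 2*r - 1"
      "card (ball_inter n r id (inv p \<circ> q)) \<le> card (ball_inter n r id s')"
      using exists_closer_pair assms(4) by blast
    have "card (ball_inter n r p q) \<le> card (ball_inter n r id (inv p \<circ> q))"
      using card_ball_inter_le_comp_left[OF p'(2), of r p q] permutes_inv_o(2)[OF p'(1)] by simp
    also have "\<dots> \<le> card (ball_inter n r id s')" by (fact s'(3))
    also have "\<dots> \<le> Iint n (2*r - 1) r"
      using card_ball_inter_le_Iint[OF id_in_Sym s'(1,2)] .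
    finally show ?thesis .
  next
    case 3
    then show ?thesis using ball_inter_eq_empty by simp
  qed
qed

lemma Nint_far_le_Iint:
  assumes "p \<in> Sym n" "q \<in> Sym n" "d \<le> hdist n p q" "2*r - 1 \<le> d" "2 \<le> r"
  shows "Nint n d r \<le> Iint n (2*r - 1) r"
  by (rule Nint_le[OF assms(1-3)]) (use card_ball_inter_far_le_Iint assms(4,5) in auto)

section \<open>A lower-bound construction\<close>

definition perm_list :: "nat \<Rightarrow> nat list \<Rightarrow> bool" where
  "perm_list c L \<longleftrightarrow> length L = c \<and> distinct L \<and> set L = {1..c}"

definition perm_of_list :: "nat list \<Rightarrow> nat \<Rightarrow> nat" where
  "perm_of_list L i = (if 1 \<le> i \<and> i \<le> length L then L ! (i - 1) else i)"

text \<open>Swap \<open>c + 2j + 1\<close> and \<open>c + 2j + 2\<close> for every \<open>j \<in> S\<close>.\<close>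
definition pair_swaps :: "nat \<Rightarrow> nat set \<Rightarrow> nat \<Rightarrow> nat" where
  "pair_swaps c S i =
    (if c < i \<and> (i - c - 1) div 2 \<in> S then (if even (i - c - 1) then i + 1 else i - 1) else i)"

definition block_perm :: "nat list \<Rightarrow> nat set \<Rightarrow> nat \<Rightarrow> nat" where
  "block_perm L S = perm_of_list L \<circ> pair_swaps (length L) S"

definition list_hdist :: "nat list \<Rightarrow> nat list \<Rightarrow> nat" where
  "list_hdist L L' = length (filter (\<lambda>i. L ! i \<noteq> L' ! i) [0..<length L])"

lemma perm_of_list_permutes:
  assumes "perm_list c L"
  shows "perm_of_list L permutes {1..c}"
proof (rule bij_imp_permutes)
  have L: "length L = c" "distinct L" "set L = {1..c}"
    using assms unfolding perm_list_def by auto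
  have into: "perm_of_list L ` {1..c} \<subseteq> {1..c}"
  proof
    fix y assume "y \<in> perm_of_list L ` {1..c}"
    then obtain i where "i \<in> {1..c}" "y = L ! (i - 1)"
      using L(1) unfolding perm_of_list_def by auto
    then have "y \<in> set L"
      using L(1) by auto
    then show "y \<in> {1..c}"
      using L(3) by simp
  qed
  have "inj_on (perm_of_list L) {1..c}"
  proof (rule inj_onI)
    fix i j assume ij: "i \<in> {1..c}" "j \<in> {1..c}" "perm_of_list L i = perm_of_list L j"
    then have "L ! (i - 1) = L ! (j - 1)"
      using L(1) unfolding perm_of_list_def by auto
    then show "i = j"
      using ij L(1,2) nth_eq_iff_index_eq by fastforce
  qed
  then show "bij_betw (perm_of_list L) {1..c} {1..c}"
    using into endo_inj_surj[OF _ into] by (simp add: bij_betw_def)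
  show "perm_of_list L i = i" if "i \<notin> {1..c}" for i
    using that L(1) unfolding perm_of_list_def by auto
qed

lemma pair_swaps_below: "i \<le> c \<Longrightarrow> pair_swaps c S i = i"
  unfolding pair_swaps_def by auto

lemma pair_swaps_above:
  assumes "c < i"
  shows "c < pair_swaps c S i"
proof -
  have "odd (i - c - 1) \<Longrightarrow> c < i - 1"
    using assms by presburger
  then show ?thesis
    using assms unfolding pair_swaps_def by auto
qed

lemma pair_swaps_involutive: "pair_swaps c S (pair_swaps c S i) = i"
proof (cases "c < i \<and> (i - c - 1) div 2 \<in> S")
  case swapped: True
  show ?thesis
  proof (cases "even (i - c - 1)")
    case True
    then have "pair_swaps c S i = i + 1" "odd (i + 1 - c - 1)" "(i + 1 - c - 1) div 2 = (i - c - 1) div 2"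
      using swapped unfolding pair_swaps_def by auto presburger+
    then show ?thesis
      using swapped unfolding pair_swaps_def by simp
  next
    case False
    then have "pair_swaps c S i = i - 1" "c < i - 1" "even (i - 1 - c - 1)"
        "(i - 1 - c - 1) div 2 = (i - c - 1) div 2"
      using swapped unfolding pair_swaps_def by auto presburger+
    then show ?thesis
      using swapped False unfolding pair_swaps_def by simp
  qed
next
  case False
  then show ?thesis
    unfolding pair_swaps_def by auto
qed

lemma pair_swaps_permutes:
  assumes "S \<subseteq> {..<m}" "c + 2*m \<le> n"
  shows "pair_swaps c S permutes {1..n}"
  unfolding permutes_def
proof (intro conjI allI impI)
  fix i assume "i \<notin> {1..n}"
  then have "i = 0 \<or> (m \<le> (i - c - 1) div 2 \<and> c < i)"
    using assms(2) by auto
  then show "pair_swaps c S i = i"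
    using assms(1) unfolding pair_swaps_def by auto
next
  fix j show "\<exists>!i. pair_swaps c S i = j"
    by (metis pair_swaps_involutive)
qed

lemma pair_swaps_first: "pair_swaps c S (c + 2*j + 1) = (if j \<in> S then c + 2*j + 2 else c + 2*j + 1)"
  unfolding pair_swaps_def by simp

lemma card_pair_swaps_differ:
  assumes "S \<subseteq> {..<m}" "S' \<subseteq> {..<m}" "c + 2*m \<le> n"
  shows "card {i \<in> {c+1..n}. pair_swaps c S i \<noteq> pair_swaps c S' i} = 2 * card (sym_diff S S')"
proof -
  let ?\<Delta> = "sym_diff S S'"
  have "{i \<in> {c+1..n}. pair_swaps c S i \<noteq> pair_swaps c S' i} = (\<Union>j\<in>?\<Delta>. {c + 2*j + 1, c + 2*j + 2})"
  proof (rule set_eqI, rule iffI)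
    fix i assume "i \<in> {i \<in> {c+1..n}. pair_swaps c S i \<noteq> pair_swaps c S' i}"
    then have i: "c < i" "pair_swaps c S i \<noteq> pair_swaps c S' i" by auto
    define j where "j = (i - c - 1) div 2"
    have "j \<in> ?\<Delta>"
      using i unfolding pair_swaps_def j_def by (auto split: if_splits)
    moreover have "i = c + 2*j + 1 \<or> i = c + 2*j + 2"
      using i(1) unfolding j_def by presburger
    ultimately show "i \<in> (\<Union>j\<in>?\<Delta>. {c + 2*j + 1, c + 2*j + 2})" by auto
  next
    fix i assume "i \<in> (\<Union>j\<in>?\<Delta>. {c + 2*j + 1, c + 2*j + 2})"
    then obtain j where j: "j \<in> ?\<Delta>" "i = c + 2*j + 1 \<or> i = c + 2*j + 2" by auto
    then have "j < m" "(i - c - 1) div 2 = j"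
      using assms(1,2) by auto
    then show "i \<in> {i \<in> {c+1..n}. pair_swaps c S i \<noteq> pair_swaps c S' i}"
      using j assms(3) unfolding pair_swaps_def by auto
  qed
  moreover have "finite ?\<Delta>"
    using assms(1,2) finite_subset by blast
  then have "card (\<Union>j\<in>?\<Delta>. {c + 2*j + 1, c + 2*j + 2}) = 2 * card ?\<Delta>"
    by (subst card_UN_disjoint) auto
  ultimately show ?thesis by simp
qed

lemma block_perm_below: "1 \<le> i \<Longrightarrow> i \<le> length L \<Longrightarrow> block_perm L S i = L ! (i - 1)"
  unfolding block_perm_def perm_of_list_def by (simp add: pair_swaps_below)

lemma block_perm_above: "length L < i \<Longrightarrow> block_perm L S i = pair_swaps (length L) S i"
  unfolding block_perm_def perm_of_list_def using pair_swaps_above[of "length L" i S] by simp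

lemma block_perm_permutes:
  assumes "perm_list c L" "S \<subseteq> {..<m}" "c + 2*m \<le> n"
  shows "block_perm L S permutes {1..n}"
proof -
  have "perm_of_list L permutes {1..n}"
    by (rule permutes_subset[OF perm_of_list_permutes[OF assms(1)]]) (use assms(3) in auto)
  then show ?thesis
    using pair_swaps_permutes[OF assms(2,3)] assms(1)
    unfolding block_perm_def perm_list_def by (simp add: permutes_compose)
qed

lemma hdist_block_perm:
  assumes "length L' = length L" "S \<subseteq> {..<m}" "S' \<subseteq> {..<m}" "length L + 2*m \<le> n"
  shows "hdist n (block_perm L S) (block_perm L' S') = list_hdist L L' + 2 * card (sym_diff S S')"
proof -
  let ?c = "length L"
  let ?A = "{i \<in> {1..?c}. block_perm L S i \<noteq> block_perm L' S' i}"
  let ?B = "{i \<in> {?c+1..n}. pair_swaps ?c S i \<noteq> pair_swaps ?c S' i}"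
  have "?A = Suc ` {j. j < ?c \<and> L ! j \<noteq> L' ! j}"
  proof (rule set_eqI)
    fix i
    show "i \<in> ?A \<longleftrightarrow> i \<in> Suc ` {j. j < ?c \<and> L ! j \<noteq> L' ! j}"
      using assms(1) block_perm_below[of i L S] block_perm_below[of i L' S'] by (cases i) (auto simp: image_iff)
  qed
  then have "card ?A = list_hdist L L'"
    unfolding list_hdist_def length_filter_conv_card by (simp add: card_image cong: conj_cong)
  moreover have "{i \<in> {1..n}. block_perm L S i \<noteq> block_perm L' S' i} = ?A \<union> ?B"
    using assms(1,4) by (auto simp: block_perm_above) (metis assms(1) block_perm_above not_le)
  moreover have "card (?A \<union> ?B) = card ?A + card ?B"
    by (rule card_Un_disjoint) auto
  ultimately show ?thesis
    unfolding hdist_def using card_pair_swaps_differ[OF assms(2-4)] by simp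
qed

lemma block_perm_inj:
  assumes "length L' = length L" "block_perm L S = block_perm L' S'"
  shows "L = L'" "S = S'"
proof -
  show "L = L'"
  proof (rule nth_equalityI)
    fix i assume "i < length L"
    then have "block_perm L S (Suc i) = L ! i" "block_perm L' S' (Suc i) = L' ! i"
      using assms(1) block_perm_below[of "Suc i"] by auto
    then show "L ! i = L' ! i"
      using assms(2) by simp
  qed (use assms(1) in simp)
  show "S = S'"
  proof (rule set_eqI)
    fix j
    let ?i = "length L + 2*j + 1"
    have "block_perm L S ?i = block_perm L' S' ?i"
      using assms(2) by simp
    then have "pair_swaps (length L) S ?i = pair_swaps (length L) S' ?i"
      using assms(1) block_perm_above[of L ?i S] block_perm_above[of L' ?i S'] by simp
    then show "j \<in> S \<longleftrightarrow> j \<in> S'"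
      unfolding pair_swaps_first by (auto split: if_splits)
  qed
qed

lemma block_perm_mem_ball_inter:
  assumes "perm_list c L" "perm_list c L\<^sub>0" "perm_list c L\<^sub>1" "S \<subseteq> {..<m}" "c + 2*m \<le> n"
    and "list_hdist L\<^sub>0 L + 2 * card S \<le> r" "list_hdist L L\<^sub>1 + 2 * (m - card S) \<le> r"
  shows "block_perm L S \<in> ball_inter n r (block_perm L\<^sub>0 {}) (block_perm L\<^sub>1 {..<m})"
proof -
  have len: "length L = c" "length L\<^sub>0 = c" "length L\<^sub>1 = c"
    using assms(1-3) unfolding perm_list_def by auto
  have "hdist n (block_perm L\<^sub>0 {}) (block_perm L S) = list_hdist L\<^sub>0 L + 2 * card S"
    using hdist_block_perm[of L L\<^sub>0 "{}" m S n] len assms(4,5) by simp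
  moreover have "sym_diff S {..<m} = {..<m} - S"
    using assms(4) by auto
  then have "hdist n (block_perm L\<^sub>1 {..<m}) (block_perm L S) = list_hdist L L\<^sub>1 + 2 * (m - card S)"
    using hdist_block_perm[of L\<^sub>1 L S m "{..<m}" n] hdist_commute len assms(4,5)
    by (simp add: card_Diff_subset finite_subset)
  ultimately show ?thesis
    unfolding mem_ball_inter_iff using block_perm_permutes[OF assms(1,4,5)] assms(6,7) by simp
qed

lemma card_subsets_card_plus:
  "card {S. S \<subseteq> {..<m::nat} \<and> card S + e = t} = (if e \<le> t then m choose (t - e) else 0)"
proof (cases "e \<le> t")
  case True
  then have "{S. S \<subseteq> {..<m} \<and> card S + e = t} = {S. S \<subseteq> {..<m} \<and> card S = t - e}"
    by auto
  then show ?thesis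
    using True n_subsets[of "{..<m}" "t - e"] by simp
qed auto

lemma card_Sigma_subsets:
  assumes "distinct T"
  shows "card (SIGMA x:set T. {S. S \<subseteq> {..<m::nat} \<and> card S + snd x = t})
    = (\<Sum>(L, e) \<leftarrow> T. if e \<le> t then m choose (t - e) else 0)"
proof -
  have "card (SIGMA x:set T. {S. S \<subseteq> {..<m} \<and> card S + snd x = t})
      = (\<Sum>x\<in>set T. card {S. S \<subseteq> {..<m} \<and> card S + snd x = t})"
    by (rule card_SigmaI) (auto intro: finite_subset[of _ "Pow {..<m}"])
  then show ?thesis
    using assms by (simp add: sum.distinct_set_conv_list card_subsets_card_plus case_prod_unfold)
qed

text \<open>Each entry \<open>(L, e)\<close> of the table contributes the permutations \<open>block_perm L S\<close> with
  \<open>card S = t - e\<close>.\<close>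
lemma card_ball_inter_block_perm_ge:
  fixes T :: "(nat list \<times> nat) list"
  assumes T: "\<forall>(L, e) \<in> set T. perm_list c L \<and> list_hdist L\<^sub>0 L \<le> \<delta> + 2*e \<and> list_hdist L L\<^sub>1 + 2*e \<le> \<delta> + 6"
      "distinct (map fst T)"
    and L: "perm_list c L\<^sub>0" "perm_list c L\<^sub>1"
    and r: "r = 2*t + \<delta>" and m: "m + 3 = 2*t" and n: "c + 2*m \<le> n"
  shows "(\<Sum>(L, e) \<leftarrow> T. if e \<le> t then m choose (t - e) else 0)
    \<le> card (ball_inter n r (block_perm L\<^sub>0 {}) (block_perm L\<^sub>1 {..<m}))"
proof -
  define \<Sigma> where "\<Sigma> = (SIGMA x:set T. {S. S \<subseteq> {..<m} \<and> card S + snd x = t})"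
  have "card \<Sigma> = (\<Sum>(L, e) \<leftarrow> T. if e \<le> t then m choose (t - e) else 0)"
    unfolding \<Sigma>_def by (rule card_Sigma_subsets) (use T(2) in \<open>simp add: distinct_map\<close>)
  moreover have "card \<Sigma> \<le> card (ball_inter n r (block_perm L\<^sub>0 {}) (block_perm L\<^sub>1 {..<m}))"
  proof (rule card_inj_on_le[where f = "\<lambda>((L, e), S). block_perm L S"])
    show "inj_on (\<lambda>((L, e), S). block_perm L S) \<Sigma>"
    proof (rule inj_onI, clarsimp simp: \<Sigma>_def)
      fix L e S L' e' S'
      assume LS: "(L, e) \<in> set T" "(L', e') \<in> set T" "block_perm L S = block_perm L' S'"
      then have "length L' = length L"
        using bspec[OF T(1) LS(1)] bspec[OF T(1) LS(2)] unfolding perm_list_def by simp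
      then have "L = L'" "S = S'"
        using block_perm_inj LS(3) by blast+
      with LS show "L = L' \<and> e = e' \<and> S = S'"
        using eq_key_imp_eq_value[OF T(2)] by blast
    qed
    show "(\<lambda>((L, e), S). block_perm L S) ` \<Sigma> \<subseteq> ball_inter n r (block_perm L\<^sub>0 {}) (block_perm L\<^sub>1 {..<m})"
    proof (rule image_subsetI)
      fix x assume "x \<in> \<Sigma>"
      then obtain L e S where x: "x = ((L, e), S)" and LeS: "((L, e), S) \<in> \<Sigma>"
        by (metis prod.collapse)
      then have Le: "perm_list c L" "list_hdist L\<^sub>0 L \<le> \<delta> + 2*e" "list_hdist L L\<^sub>1 + 2*e \<le> \<delta> + 6"
        and S: "S \<subseteq> {..<m}" "card S + e = t"
        using T(1) unfolding \<Sigma>_def by auto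
      moreover have "m - card S + card S = m"
        using card_mono[OF _ S(1)] by simp
      ultimately have "list_hdist L\<^sub>0 L + 2 * card S \<le> r" "list_hdist L L\<^sub>1 + 2 * (m - card S) \<le> r"
        using r m by linarith+
      then have "block_perm L S \<in> ball_inter n r (block_perm L\<^sub>0 {}) (block_perm L\<^sub>1 {..<m})"
        by (rule block_perm_mem_ball_inter[OF Le(1) L S(1) n])
      then show "(\<lambda>((L, e), S). block_perm L S) x \<in> ball_inter n r (block_perm L\<^sub>0 {}) (block_perm L\<^sub>1 {..<m})"
        using x by simp
    qed
  qed (use finite_ball_perm in blast)
  ultimately show ?thesis by simp
qed

definition table5 :: "(nat list \<times> nat) list" where
  "table5 = [([1,2,3,4,5], 0), ([2,3,4,5,1], 3), ([2,1,3,4,5], 1), ([1,3,2,4,5], 1),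
    ([1,2,4,3,5], 1), ([1,2,3,5,4], 1), ([5,2,3,4,1], 1), ([3,2,4,5,1], 2), ([2,4,3,5,1], 2),
    ([2,3,5,4,1], 2), ([2,3,4,1,5], 2), ([1,3,4,5,2], 2)]"

definition table7 :: "(nat list \<times> nat) list" where
  "table7 = [([1,2,3,4,5,6,7], 0), ([2,3,4,5,6,7,1], 3), ([2,3,1,4,5,6,7], 1), ([1,3,4,2,5,6,7], 1),
    ([1,2,4,5,3,6,7], 1), ([1,2,3,5,6,4,7], 1), ([1,2,3,4,6,7,5], 1), ([6,2,3,4,5,7,1], 1),
    ([2,7,3,4,5,6,1], 1), ([4,2,3,5,6,7,1], 2), ([2,5,3,4,6,7,1], 2), ([2,3,6,4,5,7,1], 2),
    ([2,3,4,7,5,6,1], 2), ([2,3,4,5,1,6,7], 2), ([1,3,4,5,6,2,7], 2), ([1,2,4,5,6,7,3], 2)]"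

lemma table5_valid:
  "\<forall>(L, e) \<in> set table5. perm_list 5 L \<and> list_hdist [1,2,3,4,5] L \<le> 0 + 2*e
     \<and> list_hdist L [2,3,4,5,1] + 2*e \<le> 0 + 6"
  "distinct (map fst table5)"
  "perm_list 5 [1,2,3,4,5]" "perm_list 5 [2,3,4,5,1]" "list_hdist [1,2,3,4,5] [2,3,4,5,1] = 5"
  unfolding table5_def perm_list_def by code_simp+

lemma table7_valid:
  "\<forall>(L, e) \<in> set table7. perm_list 7 L \<and> list_hdist [1,2,3,4,5,6,7] L \<le> 1 + 2*e
     \<and> list_hdist L [2,3,4,5,6,7,1] + 2*e \<le> 1 + 6"
  "distinct (map fst table7)"
  "perm_list 7 [1,2,3,4,5,6,7]" "perm_list 7 [2,3,4,5,6,7,1]" "list_hdist [1,2,3,4,5,6,7] [2,3,4,5,6,7,1] = 7"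
  unfolding table7_def perm_list_def by code_simp+

lemma table_weights:
  assumes "2 \<le> t"
  shows "(\<Sum>(L, e) \<leftarrow> table5. if e \<le> t then (2*t - 3) choose (t - e) else 0)
      = 2 * ((2*t - 3) choose t) + 5 * ((2*t - 2) choose (t - 1))"
    and "(\<Sum>(L, e) \<leftarrow> table7. if e \<le> t then (2*t - 3) choose (t - e) else 0)
      = 2 * ((2*t - 3) choose t) + 7 * ((2*t - 2) choose (t - 1))"
proof -
  have "(if 3 \<le> t then (2*t - 3) choose (t - 3) else 0) = (2*t - 3) choose t"
  proof (cases "3 \<le> t")
    case True
    then have "(2*t - 3) choose (t - 3) = (2*t - 3) choose ((2*t - 3) - (t - 3))"
      by (intro binomial_symmetric) simp
    moreover have "(2*t - 3) - (t - 3) = t"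
      using True by simp
    ultimately show ?thesis
      using True by simp
  next
    case False
    then show ?thesis
      using assms by (simp add: numeral_eq_Suc)
  qed
  moreover have "((2*t - 3) choose (t - 1)) + ((2*t - 3) choose (t - 2)) = (2*t - 2) choose (t - 1)"
    using choose_reduce_nat[of "2*t - 2" "t - 1"] assms by (simp add: numeral_eq_Suc)
  ultimately show "(\<Sum>(L, e) \<leftarrow> table5. if e \<le> t then (2*t - 3) choose (t - e) else 0)
      = 2 * ((2*t - 3) choose t) + 5 * ((2*t - 2) choose (t - 1))"
    and "(\<Sum>(L, e) \<leftarrow> table7. if e \<le> t then (2*t - 3) choose (t - e) else 0)
      = 2 * ((2*t - 3) choose t) + 7 * ((2*t - 2) choose (t - 1))"
    using assms unfolding table5_def table7_def by simp_all
qed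

lemma exists_pair_with_large_ball_inter:
  assumes "2 \<le> t" "r = 2*t \<or> r = 2*t + 1" "lstar = (if r = 2*t then 5 else 7)" "2*r - 1 \<le> n"
  shows "\<exists>p\<in>Sym n. \<exists>q\<in>Sym n. hdist n p q = 2*r - 1 \<and>
    2 * ((2*t - 3) choose t) + lstar * ((2*t - 2) choose (t - 1)) \<le> card (ball_inter n r p q)"
proof -
  obtain \<delta> T L\<^sub>0 L\<^sub>1 where
    T: "\<forall>(L, e) \<in> set T. perm_list (5 + 2*\<delta>) L \<and> list_hdist L\<^sub>0 L \<le> \<delta> + 2*e \<and> list_hdist L L\<^sub>1 + 2*e \<le> \<delta> + 6"
      "distinct (map fst T)"
    and L: "perm_list (5 + 2*\<delta>) L\<^sub>0" "perm_list (5 + 2*\<delta>) L\<^sub>1" "list_hdist L\<^sub>0 L\<^sub>1 = 5 + 2*\<delta>"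
    and r: "r = 2*t + \<delta>"
    and weight: "(\<Sum>(L, e) \<leftarrow> T. if e \<le> t then (2*t - 3) choose (t - e) else 0)
      = 2 * ((2*t - 3) choose t) + lstar * ((2*t - 2) choose (t - 1))"
  proof (cases "r = 2*t")
    case True
    then show ?thesis
      using that[where \<delta> = 0 and T = table5 and L\<^sub>0 = "[1,2,3,4,5]" and L\<^sub>1 = "[2,3,4,5,1]"]
        table5_valid table_weights(1)[OF assms(1)] assms(3) by simp
  next
    case False
    then show ?thesis
      using that[where \<delta> = 1 and T = table7 and L\<^sub>0 = "[1,2,3,4,5,6,7]" and L\<^sub>1 = "[2,3,4,5,6,7,1]"]
        table7_valid table_weights(2)[OF assms(1)] assms(2,3) by simp
  qed
  define m where "m = 2*t - 3"
  have n: "5 + 2*\<delta> + 2*m \<le> n"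
    using assms(1,4) r unfolding m_def by simp
  have len: "length L\<^sub>0 = 5 + 2*\<delta>" "length L\<^sub>1 = 5 + 2*\<delta>"
    using L unfolding perm_list_def by auto
  have "block_perm L\<^sub>0 {} \<in> Sym n" "block_perm L\<^sub>1 {..<m} \<in> Sym n"
    using block_perm_permutes[OF L(1) _ n] block_perm_permutes[OF L(2) _ n] unfolding Sym_def by auto
  moreover have "hdist n (block_perm L\<^sub>0 {}) (block_perm L\<^sub>1 {..<m}) = 2*r - 1"
    using hdist_block_perm[of L\<^sub>1 L\<^sub>0 "{}" m "{..<m}" n] len n L(3) r assms(1) unfolding m_def by simp
  moreover have "2 * ((2*t - 3) choose t) + lstar * ((2*t - 2) choose (t - 1))
      \<le> card (ball_inter n r (block_perm L\<^sub>0 {}) (block_perm L\<^sub>1 {..<m}))"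
    using card_ball_inter_block_perm_ge[OF T L(1,2) r _ n] weight assms(1) unfolding m_def by simp
  ultimately show ?thesis by blast
qed

lemma exists_perm_at_even_distance:
  assumes "2*k \<le> n"
  shows "\<exists>q\<in>Sym n. hdist n id q = 2*k"
proof
  have "pair_swaps 0 {} = id"
    by (simp add: fun_eq_iff pair_swaps_def)
  then show "hdist n id (pair_swaps 0 {..<k}) = 2*k"
    using card_pair_swaps_differ[of "{}" k "{..<k}" 0 n] assms unfolding hdist_def by simp
  show "pair_swaps 0 {..<k} \<in> Sym n"
    using pair_swaps_permutes[of "{..<k}" k 0 n] assms unfolding Sym_def by simp
qed

theorem theorem2:
  fixes t r n :: nat and lstar :: nat
  assumes "t \<ge> 2"
    and "r = 2*t \<or> r = 2*t + 1"
    and "lstar = (if r = 2*t then 5 else 7)"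
  shows "(n \<ge> 2*r - 1 \<longrightarrow>
            Iint n (2*r - 1) r \<ge> 2 * ((2*t - 3) choose t) + lstar * ((2*t - 2) choose (t - 1)))
       \<and> (n \<ge> 2*r \<longrightarrow>
            Nint n (2*r - 1) r = Iint n (2*r - 1) r
          \<and> Iint n (2*r - 1) r \<ge> Nint n (2*r) r
          \<and> Nint n (2*r - 1) r \<ge> 2 * ((2*t - 3) choose t) + lstar * ((2*t - 2) choose (t - 1)))"
proof -
  let ?bound = "2 * ((2*t - 3) choose t) + lstar * ((2*t - 2) choose (t - 1))"
  have r: "2 \<le> r"
    using assms(1,2) by auto
  have "?bound \<le> Iint n (2*r - 1) r" if n: "2*r - 1 \<le> n"
  proof -
    obtain p q where pq: "p \<in> Sym n" "q \<in> Sym n" "hdist n p q = 2*r - 1" "?bound \<le> card (ball_inter n r p q)"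
      using exists_pair_with_large_ball_inter[OF assms n] by blast
    then show ?thesis
      using card_ball_inter_le_Iint[OF pq(1-3), of r] by linarith
  qed
  moreover have "Nint n (2*r - 1) r = Iint n (2*r - 1) r \<and> Nint n (2*r) r \<le> Iint n (2*r - 1) r"
    if n: "2*r \<le> n"
  proof -
    obtain p q where pq: "p \<in> Sym n" "q \<in> Sym n" "hdist n p q = 2*r - 1"
      using exists_pair_with_large_ball_inter[OF assms, of n] n by fastforce
    obtain q' where q': "q' \<in> Sym n" "hdist n id q' = 2*r"
      using exists_perm_at_even_distance n by blast
    show ?thesis
      using Nint_far_le_Iint[OF pq(1,2)] Iint_le_Nint[OF pq] Nint_far_le_Iint[OF id_in_Sym q'(1)] pq(3) q'(2) r
      by (simp add: le_antisym)
  qed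
  ultimately show ?thesis
    by auto
qed

end
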